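(* Assume $T$ and $D$ are known and set $$\eta=\frac{1}{4e\beta},\qquad \beta=\sqrt{\frac{\frac{eKT/2+D}{4e}+D}{4e\ln K}}.$$ Then the expected regret of Skipper$(\beta,\mathrm{DEW}(\eta,\beta))$ against an oblivious adversary satisfies $$\bar{\mathcal R}_T\le 2\sqrt{\left(\frac{KTe}{2}+(1+4e)D\right)\ln K}.$$
   Context: Setting: fix integers $K\ge 2$, $T\ge 1$, and write $[K]=\{1,\dots,K\}$. An oblivious adversary fixes in advance losses $\ell_t^a\in[0,1]$ for $t=1,2,\dots$, $a\in[K]$, and nonnegative integer delays $d_1,d_2,\dots$. In each round $t$ the learner picks (possibly at random) an action $A_t\in[K]$ and suffers loss $\ell_t^{A_t}$; at the end of round $t$ (after $A_t$ has been chosen) it observes the pairs $(s,\ell_s^{A_s})$ for all $s\le t$ with $s+d_s=t$. The expected regret is $\bar{\mathcal R}_T=\mathbb E\big[\sum_{t=1}^T\ell_t^{A_t}\big]-\min_{a\in[K]}\sum_{t=1}^T\ell_t^a$, the expectation being over the learner's randomization. $D=\sum_{t=1}^T d_t$. Algorithm DEW (delayed exponential weights) with inputs $\eta>0$ and $d_{\max}$: set $\eta'=\min\{\eta,(4e\,d_{\max})^{-1}\}$ and $w_0^a=1$ for all $a$. For $t=1,2,\dots$: let $p_t^a=w_{t-1}^a/\sum_b w_{t-1}^b$; draw $A_t\sim p_t$ and play it; at the end of round $t$, for every received pair $(s,\ell_s^{A_s})$ form the estimates $\hat\ell_s^a=\ell_s^a\mathbb 1(a=A_s)/p_s^a$ for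 all $a$; update $w_t^a=w_{t-1}^a\exp\big(-\eta'\sum_{s}\hat\ell_s^a\big)$, the sum over pairs received at the end of round $t$. Skipper$(\beta,\mathcal A)$ with threshold $\beta>0$ and base algorithm $\mathcal A$: in every round $t$ it plays the action $A_t$ proposed by $\mathcal A$, and at the end of round $t$ it passes to $\mathcal A$ exactly those observed pairs $(s,\ell_s^{A_s})$ with $s+d_s=t$ and $d_s<\beta$. Skipper$(\beta,\mathrm{DEW}(\eta,\beta))$ denotes Skipper with threshold $\beta$ wrapping DEW with learning rate $\eta$ and $d_{\max}=\beta$. *)

theory Defs
  imports Complex_Main "HOL-Library.FuncSet"
begin

text \<open>Rounds are indexed 1,2,...; actions are 1..K. An action history is a function
  A :: nat => nat with A s the action played in round s.
  skipper_dew_est K lr beta l d A t a is the cumulative importance-weighted loss estimate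
  of action a that DEW (learning rate lr) has received from Skipper (threshold beta)
  before round t, i.e. from all pairs (s, l s (A s)) with s + d s < t (observed at the end
  of round s + d s <= t - 1) and d s < beta.\<close>

function skipper_dew_est ::
  "nat \<Rightarrow> real \<Rightarrow> real \<Rightarrow> (nat \<Rightarrow> nat \<Rightarrow> real) \<Rightarrow> (nat \<Rightarrow> nat) \<Rightarrow> (nat \<Rightarrow> nat) \<Rightarrow> nat \<Rightarrow> nat \<Rightarrow> real"
where
  "skipper_dew_est K lr beta l d A t a =
     (\<Sum>s\<in>{1..<t}.
        if s + d s < t \<and> real (d s) < beta \<and> A s = a
        then l s a / (exp (- lr * skipper_dew_est K lr beta l d A s a)
                      / (\<Sum>b\<in>{1..K}. exp (- lr * skipper_dew_est K lr beta l d A s b)))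
        else 0)"
  by pat_completeness auto
termination
  by (relation "measure (\<lambda>(K, lr, beta, l, d, A, t, a). t)") auto

text \<open>Effective learning rate of DEW(eta, d_max) : eta' = min eta (1/(4 e d_max)).\<close>
definition dew_rate :: "real \<Rightarrow> real \<Rightarrow> real" where
  "dew_rate eta dmax = min eta (1 / (4 * exp 1 * dmax))"

text \<open>Probability p_t^a with which Skipper(beta, DEW(eta, beta)) plays action a in round t,
  given the history A of its earlier actions (only A s for s < t matters).\<close>
definition skipper_dew_prob ::
  "nat \<Rightarrow> real \<Rightarrow> real \<Rightarrow> (nat \<Rightarrow> nat \<Rightarrow> real) \<Rightarrow> (nat \<Rightarrow> nat) \<Rightarrow> (nat \<Rightarrow> nat) \<Rightarrow> nat \<Rightarrow> nat \<Rightarrow> real"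
where
  "skipper_dew_prob K eta beta l d A t a =
     (let lr = dew_rate eta beta in
      exp (- lr * skipper_dew_est K lr beta l d A t a)
      / (\<Sum>b\<in>{1..K}. exp (- lr * skipper_dew_est K lr beta l d A t b)))"

text \<open>Expected regret over T rounds: expectation over all action sequences
  A \<in> {1..T} \<rightarrow> {1..K}, with probability prod_t p_t^{A_t} (chain rule), of the
  cumulative loss, minus the loss of the best fixed action.\<close>
definition skipper_dew_regret ::
  "nat \<Rightarrow> nat \<Rightarrow> real \<Rightarrow> real \<Rightarrow> (nat \<Rightarrow> nat \<Rightarrow> real) \<Rightarrow> (nat \<Rightarrow> nat) \<Rightarrow> real"
where
  "skipper_dew_regret K T eta beta l d =
     (\<Sum>A\<in>(\<Pi>\<^sub>E t\<in>{1..T}. {1..K}).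
        (\<Prod>t\<in>{1..T}. skipper_dew_prob K eta beta l d A t (A t)) * (\<Sum>t\<in>{1..T}. l t (A t)))
     - (MIN a\<in>{1..K}. \<Sum>t\<in>{1..T}. l t a)"

end

theory Submission
  imports Defs
begin

text \<open>Skipper ignores the rounds with delay at least \<open>\<beta>\<close>; there are at most \<open>D/\<beta>\<close> of them and
  each costs at most 1. On the remaining rounds every delay is below \<open>\<beta>\<close>, so at most
  \<open>\<beta>\<close> estimates are outstanding at any time and, since \<open>\<eta>' \<beta> \<le> 1/(4e)\<close>, the delayed
  exponential weights change by at most a factor 2 within \<open>\<beta>\<close> rounds. Hence the
  distribution \<open>q\<^sub>t\<close> of undelayed exponential weights on the same estimates satisfies
  \<open>q\<^sub>t \<le> e p\<^sub>t\<close>, and playing \<open>p\<^sub>t\<close> instead of \<open>q\<^sub>t\<close> costs at most \<open>\<eta>'\<close> per outstanding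
  estimate, i.e. \<open>\<eta>' D\<close> in total. The usual exponential weights analysis of \<open>q\<^sub>t\<close> with
  second moments bounded via \<open>q\<^sub>t \<le> e p\<^sub>t\<close> gives \<open>ln K/\<eta>' + \<eta>' e K T/2\<close>, and the choice
  of \<open>\<beta>\<close> and \<open>\<eta>\<close> balances the terms.\<close>

lemma two_le_exp_one: "exp (1::real) \<ge> 2"
  using exp_ge_add_one_self[of "1::real"] by simp

lemma exp_minus_le_quadratic:
  fixes x :: real assumes x: "x \<ge> 0"
  shows "exp (- x) \<le> 1 - x + x^2 / 2"
proof -
  have a: "1 + x + x^2/2 \<le> exp x" by (rule exp_lower_Taylor_quadratic[OF x])
  have "x^2 \<ge> 0" by simp
  then have pa: "1 + x + x^2/2 > 0" using x by linarith
  have prod: "(1 - x + x^2/2) * (1 + x + x^2/2) \<ge> 1"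
  proof -
    have "(1 - x + x^2/2) * (1 + x + x^2/2) = 1 + x^4/4" by (simp add: algebra_simps power2_eq_square power4_eq_xxxx)
    moreover have "x^4 \<ge> 0" by simp
    ultimately show ?thesis by linarith
  qed
  have "exp (- x) = 1 / exp x" by (simp add: exp_minus field_simps)
  also have "\<dots> \<le> 1 / (1 + x + x^2/2)" using a pa by (intro divide_left_mono) auto
  also have "\<dots> \<le> 1 - x + x^2 / 2" using prod pa by (simp add: divide_le_eq)
  finally show ?thesis .
qed

lemma sum_mult_sum_if:
  "(\<Sum>b\<in>X. g b * (\<Sum>s\<in>S. if P s then h s b else 0))
    = (\<Sum>s\<in>S. if P s then (\<Sum>b\<in>X. g b * h s b) else (0::real))"
proof -
  have "(\<Sum>b\<in>X. g b * (\<Sum>s\<in>S. if P s then h s b else 0)) = (\<Sum>b\<in>X. \<Sum>s\<in>S. if P s then g b * h s b else 0)"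
    unfolding sum_distrib_left by (intro sum.cong) auto
  also have "\<dots> = (\<Sum>s\<in>S. \<Sum>b\<in>X. if P s then g b * h s b else 0)"
    by (rule sum.swap)
  also have "\<dots> = (\<Sum>s\<in>S. if P s then (\<Sum>b\<in>X. g b * h s b) else 0)"
    by (intro sum.cong) auto
  finally show ?thesis .
qed

lemma sum_if_const: "finite S \<Longrightarrow> (\<Sum>s\<in>S. if P s then c else 0) = c * real (card {s\<in>S. P s})"
  by (subst sum.inter_filter[symmetric]) auto

lemma exp_minus_mult_add: "exp (- c * (x + y)) = exp (- c * x) * exp (- c * (y::real))"
  by (simp only: distrib_left exp_add)

lemma sqrt_balance:
  fixes c Y :: real
  assumes "c > 0" and "Y > 0"
  shows "Y / sqrt (Y / c) + c * sqrt (Y / c) = 2 * sqrt (c * Y)"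
proof -
  have "Y / sqrt (Y / c) = c * sqrt (Y / c)"
    using assms by (simp add: field_simps real_sqrt_divide)
  moreover have "c * sqrt (Y / c) = sqrt (c * Y)"
    using assms by (simp add: real_sqrt_divide real_sqrt_mult field_simps)
  ultimately show ?thesis by simp
qed

definition past_determined :: "nat \<Rightarrow> ((nat \<Rightarrow> nat) \<Rightarrow> real) \<Rightarrow> bool" where
  "past_determined t g \<longleftrightarrow> (\<forall>A A'. (\<forall>s<t. A s = A' s) \<longrightarrow> g A = g A')"

lemma past_determined_mono: "past_determined t g \<Longrightarrow> t \<le> t' \<Longrightarrow> past_determined t' g"
  unfolding past_determined_def by auto

lemma past_determined_comp:
  "past_determined t g \<Longrightarrow> past_determined t (\<lambda>A. f (g A))"
  unfolding past_determined_def by (intro allI impI arg_cong[where f=f]) blast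

lemma past_determined_comp2:
  "past_determined t g \<Longrightarrow> past_determined t h \<Longrightarrow> past_determined t (\<lambda>A. f (g A) (h A))"
  unfolding past_determined_def by (intro allI impI arg_cong2[where f=f]) blast+

lemma past_determined_sum:
  "(\<And>b. b \<in> B \<Longrightarrow> past_determined t (g b)) \<Longrightarrow> past_determined t (\<lambda>A. \<Sum>b\<in>B. g b A)"
  unfolding past_determined_def by (auto intro!: sum.cong)

text \<open>The parameter \<open>lr\<close> is the effective learning rate \<open>\<eta>'\<close> of DEW.\<close>

locale skipper_dew =
  fixes K :: nat and lr beta :: real and l :: "nat \<Rightarrow> nat \<Rightarrow> real" and d :: "nat \<Rightarrow> nat"
  assumes K_pos: "K \<ge> 1" and lr_pos: "lr > 0" and beta_pos: "beta > 0"
    and lr_beta: "lr * beta \<le> 1 / (4 * exp 1)"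
    and loss_range: "\<And>t a. 0 \<le> l t a \<and> l t a \<le> 1"
begin

definition est :: "(nat \<Rightarrow> nat) \<Rightarrow> nat \<Rightarrow> nat \<Rightarrow> real" where
  "est A t a = skipper_dew_est K lr beta l d A t a"
definition weight_sum :: "(nat \<Rightarrow> nat) \<Rightarrow> nat \<Rightarrow> real" where
  "weight_sum A t = (\<Sum>b\<in>{1..K}. exp (- lr * est A t b))"
definition prob :: "(nat \<Rightarrow> nat) \<Rightarrow> nat \<Rightarrow> nat \<Rightarrow> real" where
  "prob A t a = exp (- lr * est A t a) / weight_sum A t"
definition loss_est :: "(nat \<Rightarrow> nat) \<Rightarrow> nat \<Rightarrow> nat \<Rightarrow> real" where
  "loss_est A s a = (if A s = a then l s a / prob A s a else 0)"
definition admitted :: "nat \<Rightarrow> bool" where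
  "admitted s \<longleftrightarrow> real (d s) < beta"

lemma weight_sum_pos: "weight_sum A t > 0"
  unfolding weight_sum_def using K_pos by (intro sum_pos) auto

lemma prob_pos: "prob A t a > 0"
  unfolding prob_def using weight_sum_pos by simp

lemma sum_prob: "(\<Sum>a\<in>{1..K}. prob A t a) = 1"
proof -
  have "weight_sum A t \<noteq> 0" using weight_sum_pos[of A t] by simp
  then show ?thesis unfolding prob_def by (simp add: sum_divide_distrib[symmetric] weight_sum_def)
qed

lemma loss_est_nonneg: "loss_est A s a \<ge> 0"
  unfolding loss_est_def using prob_pos[of A s a] loss_range[of s a] by (auto intro!: divide_nonneg_pos)

lemma est_eq: "est A t a = (\<Sum>s\<in>{1..<t}. if s + d s < t \<and> admitted s then loss_est A s a else 0)"
  unfolding est_def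
  by (subst skipper_dew_est.simps, intro sum.cong refl)
    (simp del: skipper_dew_est.simps add: loss_est_def prob_def weight_sum_def est_def admitted_def)

lemma est_cong: "(\<And>s. s + d s < t \<Longrightarrow> A s = A' s) \<Longrightarrow> est A t a = est A' t a"
proof (induction t arbitrary: a rule: less_induct)
  case (less t)
  have "loss_est A s a = loss_est A' s a" if "s < t" "s + d s < t" for s
  proof -
    have e: "est A s b = est A' s b" for b
      using that by (intro less.IH) (auto intro: less.prems)
    have "prob A s a = prob A' s a" unfolding prob_def weight_sum_def e ..
    then show ?thesis unfolding loss_est_def using less.prems[OF that(2)] by simp
  qed
  then show ?case unfolding est_eq[of A] est_eq[of A'] by (intro sum.cong) auto
qed

lemma prob_cong: "(\<And>s. s + d s < t \<Longrightarrow> A s = A' s) \<Longrightarrow> prob A t a = prob A' t a"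
proof -
  assume h: "\<And>s. s + d s < t \<Longrightarrow> A s = A' s"
  have "est A t b = est A' t b" for b by (rule est_cong[OF h])
  then show ?thesis unfolding prob_def weight_sum_def by simp
qed

lemma est_mono: "u \<le> r \<Longrightarrow> est A u a \<le> est A r a"
proof -
  assume ur: "u \<le> r"
  have "est A u a \<le> (\<Sum>s\<in>{1..<u}. if s + d s < r \<and> admitted s then loss_est A s a else 0)"
    unfolding est_eq using ur loss_est_nonneg by (intro sum_mono) auto
  also have "\<dots> \<le> est A r a"
    unfolding est_eq using ur loss_est_nonneg by (intro sum_mono2) auto
  finally show ?thesis .
qed

lemma past_determined_prob: "past_determined t (\<lambda>A. prob A t a)"
  unfolding past_determined_def by (intro allI impI prob_cong) auto

lemma past_determined_loss_est: "s < t \<Longrightarrow> past_determined t (\<lambda>A. loss_est A s a)"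
  using past_determined_prob[of s] unfolding past_determined_def loss_est_def by (metis less_trans)

section \<open>Expectation over action histories\<close>

text \<open>For \<open>I = {1..T}\<close> the product is the probability of the history by the chain rule,
  since \<open>prob A t\<close> depends only on the actions of rounds before \<open>t\<close>.\<close>

definition expect :: "nat set \<Rightarrow> ((nat \<Rightarrow> nat) \<Rightarrow> real) \<Rightarrow> real" where
  "expect I g = (\<Sum>A\<in>Pi\<^sub>E I (\<lambda>_. {1..K}). (\<Prod>t\<in>I. prob A t (A t)) * g A)"

lemma prob_upd: "t \<le> j + d j \<Longrightarrow> prob (A(j:=y)) t a = prob A t a"
  by (rule prob_cong) auto

lemma expect_integrate_round:
  assumes fin: "finite I" and jI: "j \<in> I" and le: "\<forall>t\<in>I. t \<le> j + d j"
  shows "expect I g = expect (I - {j}) (\<lambda>A. \<Sum>a\<in>{1..K}. prob A j a * g (A(j:=a)))"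
proof -
  define I' where "I' = I - {j}"
  have II: "I = insert j I'" and jn: "j \<notin> I'" and fin': "finite I'" using jI fin by (auto simp: I'_def)
  define F where "F A = (\<Prod>t\<in>I. prob A t (A t)) * g A" for A
  have "expect I g = (\<Sum>A\<in>(\<lambda>(y, h). h(j := y)) ` ({1..K} \<times> Pi\<^sub>E I' (\<lambda>_. {1..K})). F A)"
    unfolding expect_def F_def II PiE_insert_eq ..
  also have "\<dots> = (\<Sum>(y,h)\<in>{1..K} \<times> Pi\<^sub>E I' (\<lambda>_. {1..K}). F (h(j:=y)))"
    by (subst sum.reindex) (use inj_combinator[OF jn, of "\<lambda>_. {1..K}"] in \<open>auto simp: case_prod_beta\<close>)
  also have "\<dots> = (\<Sum>y\<in>{1..K}. \<Sum>h\<in>Pi\<^sub>E I' (\<lambda>_. {1..K}). F (h(j:=y)))"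
    by (rule sum.cartesian_product[symmetric])
  also have "\<dots> = (\<Sum>h\<in>Pi\<^sub>E I' (\<lambda>_. {1..K}). \<Sum>y\<in>{1..K}. F (h(j:=y)))"
    by (rule sum.swap)
  also have "\<dots> = (\<Sum>h\<in>Pi\<^sub>E I' (\<lambda>_. {1..K}). (\<Prod>t\<in>I'. prob h t (h t)) * (\<Sum>y\<in>{1..K}. prob h j y * g (h(j:=y))))"
  proof (rule sum.cong[OF refl])
    fix h assume h: "h \<in> Pi\<^sub>E I' (\<lambda>_. {1..K})"
    have "F (h(j:=y)) = (\<Prod>t\<in>I'. prob h t (h t)) * (prob h j y * g (h(j:=y)))" for y
    proof -
      have "(\<Prod>t\<in>I. prob (h(j:=y)) t ((h(j:=y)) t)) = prob (h(j:=y)) j y * (\<Prod>t\<in>I'. prob (h(j:=y)) t ((h(j:=y)) t))"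
        unfolding II using fin' jn by simp
      also have "\<dots> = prob h j y * (\<Prod>t\<in>I'. prob h t (h t))"
        using le jn II by (intro arg_cong2[where f=times] prod.cong) (auto intro!: prob_upd)
      finally show ?thesis unfolding F_def by simp
    qed
    then show "(\<Sum>y\<in>{1..K}. F (h(j:=y))) = (\<Prod>t\<in>I'. prob h t (h t)) * (\<Sum>y\<in>{1..K}. prob h j y * g (h(j:=y)))"
      by (simp add: sum_distrib_left)
  qed
  also have "\<dots> = expect (I - {j}) (\<lambda>A. \<Sum>a\<in>{1..K}. prob A j a * g (A(j:=a)))"
    unfolding expect_def I'_def ..
  finally show ?thesis .
qed

lemma expect_empty: "expect {} g = g (\<lambda>_. undefined)"
  unfolding expect_def by simp

lemma expect_mono:
  "(\<And>A. A \<in> Pi\<^sub>E I (\<lambda>_. {1..K}) \<Longrightarrow> g A \<le> h A) \<Longrightarrow> expect I g \<le> expect I h"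
  unfolding expect_def using prob_pos by (intro sum_mono mult_left_mono prod_nonneg) (auto intro: less_imp_le)

lemma expect_add: "expect I (\<lambda>A. g A + h A) = expect I g + expect I h"
  unfolding expect_def by (simp add: distrib_left sum.distrib)

lemma expect_sum: "expect I (\<lambda>A. \<Sum>x\<in>X. g x A) = (\<Sum>x\<in>X. expect I (g x))"
  unfolding expect_def by (simp add: sum_distrib_left sum.swap[of _ X])

lemma expect_cmult: "expect I (\<lambda>A. c * g A) = c * expect I g"
  unfolding expect_def by (simp add: sum_distrib_left mult_ac)

lemma expect_diff: "expect I (\<lambda>A. g A - h A) = expect I g - expect I h"
  unfolding expect_def by (simp add: right_diff_distrib sum_subtractf)

lemma expect_if: "expect I (\<lambda>A. if c then g A else 0) = (if c then expect I g else 0)"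
  by (cases c) (simp_all add: expect_def)

lemma expect_restrict_past:
  assumes "finite I" "past_determined t g"
  shows "expect I g = expect (I \<inter> {..<t}) g"
  using assms(1)
proof (induction I rule: finite_linorder_max_induct)
  case empty
  then show ?case by simp
next
  case (insert b I)
  show ?case
  proof (cases "b < t")
    case True
    then have "insert b I \<inter> {..<t} = insert b I" using insert by auto
    then show ?thesis by simp
  next
    case False
    have bI: "b \<notin> I" using insert by auto
    have "expect (insert b I) g = expect I (\<lambda>A. \<Sum>a\<in>{1..K}. prob A b a * g (A(b:=a)))"
    proof -
      have "\<forall>t\<in>I. t \<le> b + d b" using insert(2) by (auto intro: less_imp_le trans_le_add1)
      then show ?thesis using expect_integrate_round[of "insert b I" b g] insert(1) bI by simp
    qed
    also have "\<dots> = expect I g"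
    proof -
      have "g (A(b:=a)) = g A" for A a using assms(2) False unfolding past_determined_def by auto
      then show ?thesis using sum_prob by (simp add: sum_distrib_right[symmetric])
    qed
    also have "\<dots> = expect (I \<inter> {..<t}) g" by (rule insert.IH)
    also have "I \<inter> {..<t} = insert b I \<inter> {..<t}" using False by auto
    finally show ?thesis .
  qed
qed

lemma expect_one: "finite I \<Longrightarrow> expect I (\<lambda>_. 1) = 1"
  using expect_restrict_past[of I 0 "\<lambda>_. 1"] by (simp add: past_determined_def expect_empty)

lemma expect_const: "finite I \<Longrightarrow> expect I (\<lambda>_. c) = c"
  using expect_cmult[of I c "\<lambda>_. 1"] expect_one by simp

lemma expect_condition_round:
  assumes t: "t \<in> {1..T}" and g: "past_determined (Suc t) g"
  shows "expect {1..T} g = expect {1..<t} (\<lambda>A. \<Sum>a\<in>{1..K}. prob A t a * g (A(t:=a)))"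
proof -
  have "expect {1..T} g = expect ({1..T} \<inter> {..<Suc t}) g" by (rule expect_restrict_past[OF _ g]) simp
  also have "{1..T} \<inter> {..<Suc t} = {1..t}" using t by auto
  also have "expect {1..t} g = expect ({1..t} - {t}) (\<lambda>A. \<Sum>a\<in>{1..K}. prob A t a * g (A(t:=a)))"
    using t by (intro expect_integrate_round) auto
  also have "{1..t} - {t} = {1..<t}" by auto
  finally show ?thesis .
qed

lemma expect_extend: "t \<le> Suc T \<Longrightarrow> past_determined t g \<Longrightarrow> expect {1..<t} g = expect {1..T} g"
proof -
  assume t: "t \<le> Suc T" and g: "past_determined t g"
  have "expect {1..T} g = expect ({1..T} \<inter> {..<t}) g" by (rule expect_restrict_past[OF _ g]) simp
  also have "{1..T} \<inter> {..<t} = {1..<t}" using t by auto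
  finally show ?thesis by simp
qed

section \<open>Stability of the delayed weights\<close>

definition dmax :: nat where
  "dmax = nat (\<lceil>beta\<rceil> - 1)"

lemma admitted_delay_le: "admitted s \<Longrightarrow> d s \<le> dmax"
proof -
  assume "admitted s"
  then have "real (d s) < beta" by (simp add: admitted_def)
  also have "beta \<le> of_int \<lceil>beta\<rceil>" by (rule le_of_int_ceiling)
  finally have "int (d s) < \<lceil>beta\<rceil>" by linarith
  then show ?thesis unfolding dmax_def by linarith
qed

lemma dmax_le_beta: "real dmax \<le> beta"
proof -
  have "\<lceil>beta\<rceil> \<ge> 1" using beta_pos by (simp add: order.strict_implies_order)
  moreover have "of_int \<lceil>beta\<rceil> \<le> beta + 1" by (rule of_int_ceiling_le_add_one)
  ultimately show ?thesis unfolding dmax_def by (simp add: of_nat_nat)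
qed

lemma lr_dmax_le: "4 * lr * real dmax \<le> 1 / exp 1"
proof -
  have "lr * real dmax \<le> lr * beta" using dmax_le_beta lr_pos by (simp add: mult_left_mono)
  then have "lr * real dmax \<le> 1 / (4 * exp 1)" using lr_beta by linarith
  then have "4 * (lr * real dmax) \<le> 4 * (1 / (4 * exp 1))" by linarith
  then show ?thesis by simp
qed

lemma lr_dmax_le_half: "4 * lr * real dmax \<le> 1/2"
  using lr_dmax_le two_le_exp_one by (smt (verit) frac_le zero_less_one)

definition arrivals :: "nat \<Rightarrow> nat \<Rightarrow> nat" where
  "arrivals u r = card {u'\<in>{1..<r}. admitted u' \<and> u \<le> u' + d u' \<and> u' + d u' < r}"

lemma arrivals_le: "r \<le> u + dmax \<Longrightarrow> arrivals u r \<le> 2 * dmax"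
proof -
  assume r: "r \<le> u + dmax"
  have "{u'\<in>{1..<r}. admitted u' \<and> u \<le> u' + d u' \<and> u' + d u' < r} \<subseteq> {u - dmax..<r}"
    using admitted_delay_le by fastforce
  then have "arrivals u r \<le> card {u - dmax..<r}" unfolding arrivals_def by (intro card_mono) auto
  also have "\<dots> \<le> 2 * dmax" using r by simp
  finally show ?thesis .
qed

lemma lr_arrivals_le_half: "r \<le> u + dmax \<Longrightarrow> 2 * lr * arrivals u r \<le> 1/2"
proof -
  assume "r \<le> u + dmax"
  then have "real (arrivals u r) \<le> 2 * real dmax" using arrivals_le by fastforce
  then have "2 * lr * arrivals u r \<le> 4 * lr * real dmax" using lr_pos by (simp add: mult_left_mono)
  then show ?thesis using lr_dmax_le_half by linarith
qed

lemma prob_ratio_le_of_weight_sum: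
  assumes "weight_sum A u * (1 - 2 * lr * arrivals u r) \<le> weight_sum A r" "u \<le> r" "r \<le> u + dmax"
  shows "prob A r a \<le> 2 * prob A u a"
proof -
  have "weight_sum A u * (1/2) \<le> weight_sum A u * (1 - 2 * lr * arrivals u r)"
    using lr_arrivals_le_half[OF assms(3)] weight_sum_pos[of A u] by (intro mult_left_mono) auto
  then have Wr: "weight_sum A u / 2 \<le> weight_sum A r" using assms(1) by simp
  have "exp (- lr * est A r a) \<le> exp (- lr * est A u a)"
    using est_mono[OF assms(2)] lr_pos by (simp add: mult_left_mono)
  then have "prob A r a \<le> exp (- lr * est A u a) / weight_sum A r" unfolding prob_def using weight_sum_pos[of A r]
    by (simp add: divide_right_mono)
  also have "\<dots> \<le> exp (- lr * est A u a) / (weight_sum A u / 2)"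
    using Wr weight_sum_pos[of A u] by (intro divide_left_mono) auto
  also have "\<dots> = 2 * prob A u a" unfolding prob_def by simp
  finally show ?thesis .
qed

lemma sum_prob_loss_est_le:
  assumes "\<And>a. a \<in> {1..K} \<Longrightarrow> prob A r a \<le> C * prob A u a" and C0: "C \<ge> 0"
  shows "(\<Sum>b\<in>{1..K}. prob A r b * loss_est A u b) \<le> C"
proof -
  have "prob A r b * loss_est A u b \<le> (if b = A u then C else 0)" if "b \<in> {1..K}" for b
  proof (cases "b = A u")
    case True
    have "prob A r b * loss_est A u b = prob A r b / prob A u b * l u b" using True unfolding loss_est_def by simp
    also have "\<dots> \<le> C * 1"
    proof (rule mult_mono)
      show "prob A r b / prob A u b \<le> C" using assms(1)[OF that] prob_pos[of A u b] by (simp add: divide_le_eq)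
      show "0 \<le> C" by (rule C0)
    qed (use loss_range prob_pos in \<open>auto intro: less_imp_le\<close>)
    finally show ?thesis using True by simp
  qed (simp add: loss_est_def)
  then have "(\<Sum>b\<in>{1..K}. prob A r b * loss_est A u b) \<le> (\<Sum>b\<in>{1..K}. if b = A u then C else 0)"
    by (rule sum_mono)
  also have "\<dots> \<le> C"
    using C0 by (simp add: sum.delta)
  finally show ?thesis .
qed

definition arrived_est :: "(nat \<Rightarrow> nat) \<Rightarrow> nat \<Rightarrow> nat \<Rightarrow> real" where
  "arrived_est A v b = (\<Sum>u\<in>{1..<Suc v}. if admitted u \<and> u + d u = v then loss_est A u b else 0)"
definition arriving :: "nat \<Rightarrow> nat set" where
  "arriving v = {u\<in>{1..<Suc v}. admitted u \<and> u + d u = v}"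

lemma est_Suc: "est A (Suc v) b = est A v b + arrived_est A v b"
proof -
  have "est A (Suc v) b = (\<Sum>s\<in>{1..<Suc v}. (if s + d s < v \<and> admitted s then loss_est A s b else 0)
          + (if admitted s \<and> s + d s = v then loss_est A s b else 0))"
    unfolding est_eq by (intro sum.cong) auto
  also have "\<dots> = (\<Sum>s\<in>{1..<Suc v}. (if s + d s < v \<and> admitted s then loss_est A s b else 0)) + arrived_est A v b"
    unfolding arrived_est_def by (rule sum.distrib)
  also have "(\<Sum>s\<in>{1..<Suc v}. (if s + d s < v \<and> admitted s then loss_est A s b else 0)) = est A v b"
    unfolding est_eq by (simp add: sum.op_ivl_Suc)
  finally show ?thesis .
qed

lemma weight_sum_Suc_ge:
  assumes rat: "\<And>u a. u \<in> arriving r \<Longrightarrow> a \<in> {1..K} \<Longrightarrow> prob A r a \<le> 2 * prob A u a"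
  shows "weight_sum A r * (1 - 2 * lr * card (arriving r)) \<le> weight_sum A (Suc r)"
proof -
  have pe: "exp (- lr * est A r b) = weight_sum A r * prob A r b" for b
    unfolding prob_def using weight_sum_pos[of A r] by simp
  have "(\<Sum>b\<in>{1..K}. prob A r b * arrived_est A r b)
      = (\<Sum>u\<in>{1..<Suc r}. if admitted u \<and> u + d u = r then (\<Sum>b\<in>{1..K}. prob A r b * loss_est A u b) else 0)"
    unfolding arrived_est_def by (rule sum_mult_sum_if)
  also have "\<dots> \<le> (\<Sum>u\<in>{1..<Suc r}. if admitted u \<and> u + d u = r then 2 else 0)"
  proof -
    have "(\<Sum>b\<in>{1..K}. prob A r b * loss_est A u b) \<le> 2" if "u \<in> arriving r" for u
      by (rule sum_prob_loss_est_le) (auto intro: rat[OF that])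
    then show ?thesis by (intro sum_mono) (auto simp: arriving_def)
  qed
  also have "\<dots> = 2 * card (arriving r)"
    unfolding arriving_def by (subst sum.inter_filter[symmetric]) auto
  finally have S: "(\<Sum>b\<in>{1..K}. prob A r b * arrived_est A r b) \<le> 2 * card (arriving r)" .
  have "weight_sum A r * (1 - 2 * lr * card (arriving r)) \<le> weight_sum A r * (1 - lr * (\<Sum>b\<in>{1..K}. prob A r b * arrived_est A r b))"
    using S weight_sum_pos[of A r] lr_pos by (intro mult_left_mono) (auto simp: mult_left_mono)
  also have "\<dots> = (\<Sum>b\<in>{1..K}. exp (- lr * est A r b) * (1 - lr * arrived_est A r b))"
  proof -
    have "(\<Sum>b\<in>{1..K}. weight_sum A r * prob A r b * (1 - lr * arrived_est A r b))
       = weight_sum A r * (\<Sum>b\<in>{1..K}. prob A r b) - lr * weight_sum A r * (\<Sum>b\<in>{1..K}. prob A r b * arrived_est A r b)"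
      by (simp add: algebra_simps sum_subtractf sum_distrib_left)
    then show ?thesis unfolding pe sum_prob by (simp add: algebra_simps)
  qed
  also have "\<dots> \<le> (\<Sum>b\<in>{1..K}. exp (- lr * est A r b) * exp (- lr * arrived_est A r b))"
    using exp_ge_add_one_self[of "- (lr * arrived_est A r _)"] by (intro sum_mono mult_left_mono) (auto simp: less_imp_le)
  also have "\<dots> = weight_sum A (Suc r)"
    unfolding weight_sum_def est_Suc by (simp add: distrib_left exp_add[symmetric])
  finally show ?thesis .
qed

lemma arrivals_Suc: "u \<le> r \<Longrightarrow> arrivals u (Suc r) = arrivals u r + card (arriving r)"
proof -
  assume ur: "u \<le> r"
  have "{u'\<in>{1..<Suc r}. admitted u' \<and> u \<le> u' + d u' \<and> u' + d u' < Suc r}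
      = {u'\<in>{1..<r}. admitted u' \<and> u \<le> u' + d u' \<and> u' + d u' < r} \<union> arriving r"
    using ur unfolding arriving_def by auto
  moreover have "{u'\<in>{1..<r}. admitted u' \<and> u \<le> u' + d u' \<and> u' + d u' < r} \<inter> arriving r = {}"
    unfolding arriving_def by auto
  ultimately show ?thesis unfolding arrivals_def
    by (simp add: card_Un_disjoint arriving_def)
qed

text \<open>By induction on \<open>r\<close>: the estimates arriving at the end of round \<open>r\<close> were incurred within
  \<open>dmax\<close> rounds before, so by the induction hypothesis their importance weights relative to
  \<open>prob A r\<close> are at most 2, and each of them shrinks the weight sum by a factor at least
  \<open>1 - 2 lr\<close>.\<close>

lemma weight_sum_stable:
  "u \<le> r \<Longrightarrow> r \<le> u + dmax \<Longrightarrow> weight_sum A u * (1 - 2 * lr * arrivals u r) \<le> weight_sum A r"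
proof (induction r arbitrary: u)
  case 0
  then show ?case by (simp add: arrivals_def)
next
  case (Suc r)
  show ?case
  proof (cases "u = Suc r")
    case True
    have "{u'\<in>{1..<u}. admitted u' \<and> u \<le> u' + d u' \<and> u' + d u' < u} = {}" by auto
    then have "arrivals u u = 0" unfolding arrivals_def by (metis card.empty)
    then show ?thesis using True by simp
  next
    case False
    then have ur: "u \<le> r" "r \<le> u + dmax" using Suc.prems by auto
    define c where "c = arrivals u r"
    define n where "n = card (arriving r)"
    have IH: "weight_sum A u * (1 - 2 * lr * c) \<le> weight_sum A r" using Suc.IH[OF ur] by (simp add: c_def)
    have rat: "prob A r a \<le> 2 * prob A u' a" if "u' \<in> arriving r" "a \<in> {1..K}" for u' a
    proof -
      have u': "u' \<le> r" "r \<le> u' + dmax" using that admitted_delay_le unfolding arriving_def by auto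
      show ?thesis by (rule prob_ratio_le_of_weight_sum[OF Suc.IH[OF u'] u'])
    qed
    have step: "weight_sum A r * (1 - 2 * lr * n) \<le> weight_sum A (Suc r)"
      unfolding n_def by (rule weight_sum_Suc_ge[OF rat])
    have cn: "arrivals u (Suc r) = c + n" unfolding c_def n_def by (rule arrivals_Suc[OF ur(1)])
    have c0: "2 * lr * c \<ge> 0" "2 * lr * n \<ge> 0" using lr_pos by auto
    have "2 * lr * (c + n) \<le> 1/2" using lr_arrivals_le_half[of "Suc r" u] Suc.prems cn by simp
    then have n1: "2 * lr * n \<le> 1/2" using c0 by (simp add: distrib_left)
    have "weight_sum A u * (1 - 2 * lr * arrivals u (Suc r)) = weight_sum A u * (1 - 2 * lr * c - 2 * lr * n)"
      by (simp add: cn algebra_simps)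
    also have "\<dots> \<le> weight_sum A u * ((1 - 2 * lr * c) * (1 - 2 * lr * n))"
      using weight_sum_pos[of A u] c0 mult_nonneg_nonneg[OF c0] by (intro mult_left_mono) (auto simp: algebra_simps)
    also have "\<dots> = (weight_sum A u * (1 - 2 * lr * c)) * (1 - 2 * lr * n)" by simp
    also have "\<dots> \<le> weight_sum A r * (1 - 2 * lr * n)"
      using IH n1 by (intro mult_right_mono) auto
    also have "\<dots> \<le> weight_sum A (Suc r)" by (rule step)
    finally show ?thesis .
  qed
qed

lemma prob_stable: "u \<le> r \<Longrightarrow> r \<le> u + dmax \<Longrightarrow> prob A r a \<le> 2 * prob A u a"
  by (rule prob_ratio_le_of_weight_sum[OF weight_sum_stable])

section \<open>The undelayed reference distribution\<close>

text \<open>\<open>full_prob\<close> is exponential weights fed with every admitted estimate immediately; it is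
  never played and serves only the analysis.\<close>

definition full_est :: "(nat \<Rightarrow> nat) \<Rightarrow> nat \<Rightarrow> nat \<Rightarrow> real" where
  "full_est A t b = (\<Sum>s\<in>{1..<t}. if admitted s then loss_est A s b else 0)"
definition pending_est :: "(nat \<Rightarrow> nat) \<Rightarrow> nat \<Rightarrow> nat \<Rightarrow> real" where
  "pending_est A t b = (\<Sum>s\<in>{1..<t}. if admitted s \<and> t \<le> s + d s then loss_est A s b else 0)"
definition full_weight_sum :: "(nat \<Rightarrow> nat) \<Rightarrow> nat \<Rightarrow> real" where
  "full_weight_sum A t = (\<Sum>b\<in>{1..K}. exp (- lr * full_est A t b))"
definition full_prob :: "(nat \<Rightarrow> nat) \<Rightarrow> nat \<Rightarrow> nat \<Rightarrow> real" where
  "full_prob A t a = exp (- lr * full_est A t a) / full_weight_sum A t"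
definition pending :: "nat \<Rightarrow> nat set" where
  "pending t = {s\<in>{1..<t}. admitted s \<and> t \<le> s + d s}"

lemma full_est_eq: "full_est A t b = est A t b + pending_est A t b"
  unfolding full_est_def pending_est_def est_eq by (subst sum.distrib[symmetric]) (intro sum.cong, auto)

lemma pending_est_nonneg: "pending_est A t b \<ge> 0"
  unfolding pending_est_def using loss_est_nonneg by (intro sum_nonneg) auto

lemma full_weight_sum_pos: "full_weight_sum A t > 0"
  unfolding full_weight_sum_def using K_pos by (intro sum_pos) auto

lemma full_prob_pos: "full_prob A t a > 0"
  unfolding full_prob_def using full_weight_sum_pos by simp

lemma sum_full_prob: "(\<Sum>a\<in>{1..K}. full_prob A t a) = 1"
proof -
  have "full_weight_sum A t \<noteq> 0" using full_weight_sum_pos[of A t] by simp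
  then show ?thesis unfolding full_prob_def by (simp add: sum_divide_distrib[symmetric] full_weight_sum_def)
qed

lemma full_weight_sum_eq: "full_weight_sum A t = weight_sum A t * (\<Sum>b\<in>{1..K}. prob A t b * exp (- lr * pending_est A t b))"
proof -
  have "exp (- lr * est A t b) = weight_sum A t * prob A t b" for b
    unfolding prob_def using weight_sum_pos[of A t] by simp
  then show ?thesis unfolding full_weight_sum_def full_est_eq exp_minus_mult_add
    by (simp add: sum_distrib_left mult_ac)
qed

lemma full_weight_sum_le: "full_weight_sum A t \<le> weight_sum A t"
proof -
  have "(\<Sum>b\<in>{1..K}. prob A t b * exp (- lr * pending_est A t b)) \<le> (\<Sum>b\<in>{1..K}. prob A t b)"
    using prob_pos pending_est_nonneg lr_pos by (intro sum_mono) (auto intro!: mult_left_le simp: less_imp_le)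
  then show ?thesis unfolding full_weight_sum_eq sum_prob using weight_sum_pos[of A t] by (simp add: mult_left_le)
qed

lemma full_prob_ge: "full_prob A t a \<ge> prob A t a * exp (- lr * pending_est A t a)"
proof -
  have "prob A t a * exp (- lr * pending_est A t a) = exp (- lr * full_est A t a) / weight_sum A t"
    unfolding prob_def full_est_eq exp_minus_mult_add by simp
  also have "\<dots> \<le> full_prob A t a" unfolding full_prob_def
    using full_weight_sum_le[of A t] full_weight_sum_pos[of A t] weight_sum_pos[of A t] by (intro divide_left_mono) auto
  finally show ?thesis .
qed

lemma prob_minus_full_prob_mult_loss_le:
  "(prob A t a - full_prob A t a) * l t a \<le> lr * (prob A t a * pending_est A t a)"
proof -
  have "prob A t a * (1 - lr * pending_est A t a) \<le> prob A t a * exp (- lr * pending_est A t a)"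
    using prob_pos[of A t a] exp_ge_add_one_self[of "- lr * pending_est A t a"] by (intro mult_left_mono) auto
  then have pq: "prob A t a - full_prob A t a \<le> lr * (prob A t a * pending_est A t a)"
    using full_prob_ge[of A t a] by (simp add: algebra_simps)
  show ?thesis
  proof (cases "prob A t a - full_prob A t a \<le> 0")
    case True
    moreover have "lr * (prob A t a * pending_est A t a) \<ge> 0"
      using lr_pos prob_pos[of A t a] pending_est_nonneg[of A t a] by simp
    ultimately show ?thesis using loss_range[of t a] by (smt (verit) mult_nonpos_nonneg)
  next
    case False
    then have "(prob A t a - full_prob A t a) * l t a \<le> (prob A t a - full_prob A t a) * 1"
      using loss_range[of t a] by (intro mult_left_mono) auto
    then show ?thesis using pq by simp
  qed
qed

lemma card_pending_le: "card (pending t) \<le> dmax"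
proof -
  have "pending t \<subseteq> {t - dmax..<t}" unfolding pending_def using admitted_delay_le by fastforce
  then have "card (pending t) \<le> card {t - dmax..<t}" by (intro card_mono) auto
  then show ?thesis by simp
qed

lemma sum_prob_pending_est_le:
  "(\<Sum>b\<in>{1..K}. prob A t b * pending_est A t b) \<le> 2 * real (card (pending t))"
proof -
  have "(\<Sum>b\<in>{1..K}. prob A t b * pending_est A t b)
      = (\<Sum>s\<in>{1..<t}. if admitted s \<and> t \<le> s + d s then (\<Sum>b\<in>{1..K}. prob A t b * loss_est A s b) else 0)"
    unfolding pending_est_def by (rule sum_mult_sum_if)
  also have "\<dots> \<le> (\<Sum>s\<in>{1..<t}. if admitted s \<and> t \<le> s + d s then 2 else 0)"
  proof (rule sum_mono)
    fix s assume "s \<in> {1..<t}"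
    then have "(\<Sum>b\<in>{1..K}. prob A t b * loss_est A s b) \<le> 2" if "admitted s" "t \<le> s + d s"
      using admitted_delay_le[OF that(1)] that(2) by (intro sum_prob_loss_est_le prob_stable) auto
    then show "(if admitted s \<and> t \<le> s + d s then \<Sum>b\<in>{1..K}. prob A t b * loss_est A s b else 0)
        \<le> (if admitted s \<and> t \<le> s + d s then 2 else 0)" by simp
  qed
  also have "\<dots> = 2 * real (card (pending t))" unfolding pending_def by (rule sum_if_const) simp
  finally show ?thesis .
qed

lemma full_weight_sum_ge: "weight_sum A t * (1 - 1 / (2 * exp 1)) \<le> full_weight_sum A t"
proof -
  have "lr * (\<Sum>b\<in>{1..K}. prob A t b * pending_est A t b) \<le> lr * (2 * real dmax)"
    using sum_prob_pending_est_le[of A t] card_pending_le[of t] lr_pos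
    by (intro mult_left_mono) auto
  also have "\<dots> \<le> 1 / (2 * exp 1)" using lr_dmax_le by simp
  finally have small: "lr * (\<Sum>b\<in>{1..K}. prob A t b * pending_est A t b) \<le> 1 / (2 * exp 1)" .
  have "1 - lr * (\<Sum>b\<in>{1..K}. prob A t b * pending_est A t b)
      = (\<Sum>b\<in>{1..K}. prob A t b * (1 - lr * pending_est A t b))"
    using sum_prob[of A t] by (simp add: algebra_simps sum_subtractf sum_distrib_left)
  also have "\<dots> \<le> (\<Sum>b\<in>{1..K}. prob A t b * exp (- lr * pending_est A t b))"
    using prob_pos exp_ge_add_one_self[of "- (lr * pending_est A t _)"]
    by (intro sum_mono mult_left_mono) (auto simp: less_imp_le)
  finally have "1 - 1 / (2 * exp 1) \<le> (\<Sum>b\<in>{1..K}. prob A t b * exp (- lr * pending_est A t b))"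
    using small by linarith
  then show ?thesis
    unfolding full_weight_sum_eq using weight_sum_pos[of A t] by (intro mult_left_mono) auto
qed

lemma full_prob_le: "full_prob A t a \<le> exp 1 * prob A t a"
proof -
  have pos: "1 - 1 / (2 * exp (1::real)) > 0" using two_le_exp_one by (simp add: field_simps)
  have "full_prob A t a \<le> exp (- lr * est A t a) / full_weight_sum A t"
    unfolding full_prob_def full_est_eq using pending_est_nonneg[of A t a] lr_pos full_weight_sum_pos[of A t]
    by (intro divide_right_mono) (auto simp: mult_left_mono)
  also have "\<dots> \<le> exp (- lr * est A t a) / (weight_sum A t * (1 - 1 / (2 * exp 1)))"
    using full_weight_sum_ge weight_sum_pos[of A t] full_weight_sum_pos[of A t] pos
    by (intro divide_left_mono mult_pos_pos) auto
  also have "\<dots> = prob A t a / (1 - 1 / (2 * exp 1))" unfolding prob_def by simp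
  also have "\<dots> \<le> exp 1 * prob A t a"
    using pos prob_pos[of A t a] two_le_exp_one by (simp add: divide_le_eq field_simps)
  finally show ?thesis .
qed

lemma full_est_Suc: "1 \<le> t \<Longrightarrow> full_est A (Suc t) b = full_est A t b + (if admitted t then loss_est A t b else 0)"
  unfolding full_est_def by (simp add: sum.op_ivl_Suc)

definition log_ratio_bound :: "(nat \<Rightarrow> nat) \<Rightarrow> nat \<Rightarrow> real" where
  "log_ratio_bound A t = (if admitted t then - lr * (\<Sum>b\<in>{1..K}. full_prob A t b * loss_est A t b)
     + lr^2 / 2 * (\<Sum>b\<in>{1..K}. full_prob A t b * (loss_est A t b)^2) else 0)"

lemma full_weight_sum_Suc_le: "1 \<le> t \<Longrightarrow> full_weight_sum A (Suc t) \<le> full_weight_sum A t * exp (log_ratio_bound A t)"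
proof (cases "admitted t")
  case False
  assume "1 \<le> t"
  then show ?thesis using False unfolding full_weight_sum_def full_est_Suc[OF \<open>1 \<le> t\<close>] log_ratio_bound_def by simp
next
  case True
  assume t: "1 \<le> t"
  have qe: "exp (- lr * full_est A t b) = full_weight_sum A t * full_prob A t b" for b
    unfolding full_prob_def using full_weight_sum_pos[of A t] by simp
  have "full_weight_sum A (Suc t) = (\<Sum>b\<in>{1..K}. exp (- lr * full_est A t b) * exp (- lr * loss_est A t b))"
    unfolding full_weight_sum_def full_est_Suc[OF t] exp_minus_mult_add using True by simp
  also have "\<dots> = (\<Sum>b\<in>{1..K}. full_weight_sum A t * full_prob A t b * exp (- lr * loss_est A t b))"
    by (simp only: qe)
  also have "\<dots> \<le> (\<Sum>b\<in>{1..K}. full_weight_sum A t * full_prob A t b * (1 - lr * loss_est A t b + (lr * loss_est A t b)^2 / 2))"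
    using full_weight_sum_pos full_prob_pos loss_est_nonneg lr_pos exp_minus_le_quadratic[of "lr * loss_est A t _"]
    by (intro sum_mono mult_left_mono) (auto intro: less_imp_le)
  also have "\<dots> = full_weight_sum A t * (1 + log_ratio_bound A t)"
  proof -
    have "(\<Sum>b\<in>{1..K}. full_weight_sum A t * full_prob A t b * (1 - lr * loss_est A t b + (lr * loss_est A t b)^2 / 2))
      = full_weight_sum A t * ((\<Sum>b\<in>{1..K}. full_prob A t b) - lr * (\<Sum>b\<in>{1..K}. full_prob A t b * loss_est A t b)
          + lr^2/2 * (\<Sum>b\<in>{1..K}. full_prob A t b * (loss_est A t b)^2))"
      by (simp add: algebra_simps sum.distrib sum_subtractf sum_distrib_left power_mult_distrib)
    then show ?thesis unfolding sum_full_prob log_ratio_bound_def using True by simp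
  qed
  also have "\<dots> \<le> full_weight_sum A t * exp (log_ratio_bound A t)"
    using full_weight_sum_pos[of A t] exp_ge_add_one_self[of "log_ratio_bound A t"] by (intro mult_left_mono) auto
  finally show ?thesis .
qed

lemma full_weight_sum_1: "full_weight_sum A (Suc 0) = real K"
  unfolding full_weight_sum_def full_est_def by simp

lemma full_weight_sum_le_exp: "full_weight_sum A (Suc n) \<le> real K * exp (\<Sum>t\<in>{1..n}. log_ratio_bound A t)"
proof (induction n)
  case 0
  then show ?case using full_weight_sum_1 by simp
next
  case (Suc n)
  have "full_weight_sum A (Suc (Suc n)) \<le> full_weight_sum A (Suc n) * exp (log_ratio_bound A (Suc n))" by (rule full_weight_sum_Suc_le) simp
  also have "\<dots> \<le> real K * exp (\<Sum>t\<in>{1..n}. log_ratio_bound A t) * exp (log_ratio_bound A (Suc n))"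
    using Suc.IH by (intro mult_right_mono) auto
  also have "\<dots> = real K * exp (\<Sum>t\<in>{1..Suc n}. log_ratio_bound A t)" by (simp add: exp_add)
  finally show ?case .
qed

lemma exp_weights_regret_le:
  assumes a: "a \<in> {1..K}"
  shows "(\<Sum>t\<in>{1..T}. if admitted t then (\<Sum>b\<in>{1..K}. full_prob A t b * loss_est A t b) - loss_est A t a else 0)
     \<le> ln (real K) / lr + lr / 2 * (\<Sum>t\<in>{1..T}. if admitted t then (\<Sum>b\<in>{1..K}. full_prob A t b * (loss_est A t b)^2) else 0)"
proof -
  have "exp (- lr * full_est A (Suc T) a) \<le> full_weight_sum A (Suc T)"
    unfolding full_weight_sum_def using a by (intro member_le_sum) auto
  also have "\<dots> \<le> real K * exp (\<Sum>t\<in>{1..T}. log_ratio_bound A t)" by (rule full_weight_sum_le_exp)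
  finally have "ln (exp (- lr * full_est A (Suc T) a)) \<le> ln (real K * exp (\<Sum>t\<in>{1..T}. log_ratio_bound A t))"
    by (subst ln_le_cancel_iff) (use K_pos in auto)
  then have log_weight: "- lr * full_est A (Suc T) a \<le> ln (real K) + (\<Sum>t\<in>{1..T}. log_ratio_bound A t)"
    using K_pos by (simp add: ln_mult)
  have full_est_T: "full_est A (Suc T) a = (\<Sum>t\<in>{1..T}. if admitted t then loss_est A t a else 0)"
    unfolding full_est_def by (intro sum.cong) auto
  have sum_log_ratio_bound: "(\<Sum>t\<in>{1..T}. log_ratio_bound A t) = - lr * (\<Sum>t\<in>{1..T}. if admitted t then (\<Sum>b\<in>{1..K}. full_prob A t b * loss_est A t b) else 0)
      + lr^2/2 * (\<Sum>t\<in>{1..T}. if admitted t then (\<Sum>b\<in>{1..K}. full_prob A t b * (loss_est A t b)^2) else 0)"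
  proof -
    have "log_ratio_bound A t = - lr * (if admitted t then (\<Sum>b\<in>{1..K}. full_prob A t b * loss_est A t b) else 0)
      + lr^2/2 * (if admitted t then (\<Sum>b\<in>{1..K}. full_prob A t b * (loss_est A t b)^2) else 0)" for t
      unfolding log_ratio_bound_def by simp
    then show ?thesis by (simp only: sum.distrib sum_distrib_left[symmetric])
  qed
  have regret_eq: "(\<Sum>t\<in>{1..T}. if admitted t then (\<Sum>b\<in>{1..K}. full_prob A t b * loss_est A t b) - loss_est A t a else 0)
     = (\<Sum>t\<in>{1..T}. if admitted t then (\<Sum>b\<in>{1..K}. full_prob A t b * loss_est A t b) else 0) - full_est A (Suc T) a"
    unfolding full_est_T by (simp add: sum_subtractf[symmetric] if_distrib cong: if_cong)
  show ?thesis unfolding regret_eq using log_weight sum_log_ratio_bound lr_pos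
    by (simp add: field_simps power2_eq_square)
qed

lemma past_determined_full_est: "past_determined t (\<lambda>A. full_est A t b)"
  unfolding full_est_def
proof (rule past_determined_sum)
  fix s assume "s \<in> {1..<t}"
  then show "past_determined t (\<lambda>A. if admitted s then loss_est A s b else 0)"
    using past_determined_loss_est[of s t b] by (simp add: past_determined_def)
qed

lemma past_determined_full_prob: "past_determined t (\<lambda>A. full_prob A t a)"
  unfolding full_prob_def full_weight_sum_def
  by (rule past_determined_comp2[OF past_determined_comp[OF past_determined_full_est]
        past_determined_sum[OF past_determined_comp[OF past_determined_full_est]]])

section \<open>Unbiasedness and drift\<close>

lemma loss_est_upd: "loss_est (A(t:=b)) t a = (if b = a then l t a / prob A t a else 0)"
  unfolding loss_est_def by (simp add: prob_upd)

lemma expect_loss_est_mult: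
  assumes t: "t \<in> {1..T}" and a: "a \<in> {1..K}" and h: "past_determined t h"
  shows "expect {1..T} (\<lambda>A. loss_est A t a * h A) = l t a * expect {1..T} h"
proof -
  have g: "past_determined (Suc t) (\<lambda>A. loss_est A t a * h A)"
    by (rule past_determined_comp2[OF past_determined_loss_est past_determined_mono[OF h]]) auto
  have "expect {1..T} (\<lambda>A. loss_est A t a * h A) = expect {1..<t} (\<lambda>A. \<Sum>b\<in>{1..K}. prob A t b * (loss_est (A(t:=b)) t a * h (A(t:=b))))"
    by (rule expect_condition_round[OF t g])
  also have "\<dots> = expect {1..<t} (\<lambda>A. l t a * h A)"
  proof -
    have "(\<Sum>b\<in>{1..K}. prob A t b * (loss_est (A(t:=b)) t a * h (A(t:=b)))) = l t a * h A" for A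
    proof -
      have hb: "h (A(t:=b)) = h A" for b using h unfolding past_determined_def by auto
      have "(\<Sum>b\<in>{1..K}. prob A t b * (loss_est (A(t:=b)) t a * h (A(t:=b))))
          = (\<Sum>b\<in>{1..K}. if b = a then prob A t a * (l t a / prob A t a * h A) else 0)"
        unfolding loss_est_upd hb by (intro sum.cong) auto
      also have "\<dots> = l t a * h A" using a prob_pos[of A t a] by (simp add: sum.delta)
      finally show ?thesis .
    qed
    then show ?thesis by simp
  qed
  also have "\<dots> = l t a * expect {1..<t} h" by (rule expect_cmult)
  also have "expect {1..<t} h = expect {1..T} h" using t h by (intro expect_extend) auto
  finally show ?thesis .
qed

lemma expect_loss_played:
  assumes t: "t \<in> {1..T}"
  shows "expect {1..T} (\<lambda>A. l t (A t)) = expect {1..T} (\<lambda>A. \<Sum>a\<in>{1..K}. prob A t a * l t a)"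
proof -
  have g: "past_determined (Suc t) (\<lambda>A. l t (A t))" unfolding past_determined_def by auto
  have dp: "past_determined t (\<lambda>A. \<Sum>a\<in>{1..K}. prob A t a * l t a)"
    by (rule past_determined_sum, rule past_determined_comp[OF past_determined_prob])
  have "expect {1..T} (\<lambda>A. l t (A t)) = expect {1..<t} (\<lambda>A. \<Sum>a\<in>{1..K}. prob A t a * l t ((A(t:=a)) t))"
    by (rule expect_condition_round[OF t g])
  also have "\<dots> = expect {1..<t} (\<lambda>A. \<Sum>a\<in>{1..K}. prob A t a * l t a)" by simp
  also have "\<dots> = expect {1..T} (\<lambda>A. \<Sum>a\<in>{1..K}. prob A t a * l t a)" using t dp by (intro expect_extend) auto
  finally show ?thesis .
qed

text \<open>Round \<open>s\<close> does not influence \<open>prob A t\<close> because its estimate is still pending, so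
  integrating out \<open>A s\<close> first turns the importance weight back into the loss.\<close>

lemma expect_prob_loss_est_le:
  assumes s: "s \<in> {1..<t}" and ts: "t \<le> s + d s" and tT: "t \<le> T"
  shows "expect {1..T} (\<lambda>A. \<Sum>a\<in>{1..K}. prob A t a * loss_est A s a) \<le> 1"
proof -
  define g where "g A = (\<Sum>a\<in>{1..K}. prob A t a * loss_est A s a)" for A
  have dg: "past_determined t g"
    unfolding g_def
    by (rule past_determined_sum, rule past_determined_comp2[OF past_determined_prob past_determined_loss_est])
      (use s in auto)
  have "expect {1..T} g = expect {1..<t} g" using tT dg by (intro expect_extend[symmetric]) auto
  also have "\<dots> = expect ({1..<t} - {s}) (\<lambda>A. \<Sum>b\<in>{1..K}. prob A s b * g (A(s:=b)))"
    using s ts by (intro expect_integrate_round) auto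
  also have "\<dots> \<le> expect ({1..<t} - {s}) (\<lambda>_. 1)"
  proof (rule expect_mono)
    fix A
    have "(\<Sum>b\<in>{1..K}. prob A s b * g (A(s:=b))) = (\<Sum>b\<in>{1..K}. prob A s b * (\<Sum>a\<in>{1..K}. prob A t a * (if b = a then l s a / prob A s a else 0)))"
      unfolding g_def loss_est_upd using ts by (simp add: prob_upd)
    also have "\<dots> = (\<Sum>b\<in>{1..K}. prob A t b * l s b)"
    proof (intro sum.cong refl)
      fix b assume "b \<in> {1..K}"
      then have "(\<Sum>a\<in>{1..K}. prob A t a * (if b = a then l s a / prob A s a else 0)) = prob A t b * (l s b / prob A s b)"
        by (simp add: if_distrib sum.delta cong: if_cong)
      then show "prob A s b * (\<Sum>a\<in>{1..K}. prob A t a * (if b = a then l s a / prob A s a else 0)) = prob A t b * l s b"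
        using prob_pos[of A s b] by simp
    qed
    also have "\<dots> \<le> (\<Sum>b\<in>{1..K}. prob A t b * 1)"
      using prob_pos loss_range by (intro sum_mono mult_left_mono) (auto intro: less_imp_le)
    also have "\<dots> = 1" using sum_prob by simp
    finally show "(\<Sum>b\<in>{1..K}. prob A s b * g (A(s:=b))) \<le> 1" .
  qed
  also have "\<dots> = 1" by (rule expect_one) simp
  finally show ?thesis unfolding g_def .
qed

lemma expect_drift_le:
  assumes t: "t \<in> {1..T}"
  shows "expect {1..T} (\<lambda>A. \<Sum>a\<in>{1..K}. (prob A t a - full_prob A t a) * l t a) \<le> lr * real (card (pending t))"
proof -
  have "expect {1..T} (\<lambda>A. \<Sum>a\<in>{1..K}. (prob A t a - full_prob A t a) * l t a)
      \<le> expect {1..T} (\<lambda>A. lr * (\<Sum>a\<in>{1..K}. prob A t a * pending_est A t a))"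
    using prob_minus_full_prob_mult_loss_le by (intro expect_mono) (simp add: sum_distrib_left sum_mono)
  also have "\<dots> = lr * expect {1..T} (\<lambda>A. \<Sum>s\<in>{1..<t}. if admitted s \<and> t \<le> s + d s then (\<Sum>b\<in>{1..K}. prob A t b * loss_est A s b) else 0)"
    unfolding expect_cmult pending_est_def sum_mult_sum_if ..
  also have "\<dots> = lr * (\<Sum>s\<in>{1..<t}. if admitted s \<and> t \<le> s + d s then expect {1..T} (\<lambda>A. \<Sum>b\<in>{1..K}. prob A t b * loss_est A s b) else 0)"
    by (simp only: expect_sum expect_if)
  also have "\<dots> \<le> lr * (\<Sum>s\<in>{1..<t}. if admitted s \<and> t \<le> s + d s then 1 else 0)"
    using lr_pos expect_prob_loss_est_le t by (intro mult_left_mono sum_mono) auto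
  also have "\<dots> = lr * real (card (pending t))" unfolding pending_def by (subst sum_if_const) auto
  finally show ?thesis .
qed

lemma expect_second_moment_le:
  assumes t: "t \<in> {1..T}"
  shows "expect {1..T} (\<lambda>A. \<Sum>b\<in>{1..K}. full_prob A t b * (loss_est A t b)^2) \<le> exp 1 * real K"
proof -
  define h where "h b A = full_prob A t b * l t b / prob A t b" for b A
  have dh: "past_determined t (h b)" for b
    unfolding h_def
    by (rule past_determined_comp2[OF past_determined_comp[OF past_determined_full_prob] past_determined_prob])
  have sq: "full_prob A t b * (loss_est A t b)^2 = loss_est A t b * h b A" for A b
    unfolding h_def loss_est_def by (simp add: power2_eq_square)
  have "expect {1..T} (\<lambda>A. \<Sum>b\<in>{1..K}. full_prob A t b * (loss_est A t b)^2) = (\<Sum>b\<in>{1..K}. expect {1..T} (\<lambda>A. loss_est A t b * h b A))"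
    unfolding sq expect_sum ..
  also have "\<dots> = (\<Sum>b\<in>{1..K}. l t b * expect {1..T} (h b))"
    using t dh by (intro sum.cong refl expect_loss_est_mult) auto
  also have "\<dots> \<le> (\<Sum>b\<in>{1..K}. exp 1)"
  proof (intro sum_mono)
    fix b assume b: "b \<in> {1..K}"
    have "l t b * expect {1..T} (h b) = expect {1..T} (\<lambda>A. l t b * h b A)" by (rule expect_cmult[symmetric])
    also have "\<dots> \<le> expect {1..T} (\<lambda>_. exp 1)"
    proof (rule expect_mono)
      fix A
      have "l t b * h b A = (l t b * l t b) * (full_prob A t b / prob A t b)" unfolding h_def by simp
      also have "\<dots> \<le> 1 * (full_prob A t b / prob A t b)"
        using loss_range[of t b] full_prob_pos[of A t b] prob_pos[of A t b]
        by (intro mult_right_mono) (auto simp: mult_le_one)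
      also have "\<dots> \<le> exp 1" using full_prob_le[of A t b] prob_pos[of A t b] by (simp add: divide_le_eq)
      finally show "l t b * h b A \<le> exp 1" .
    qed
    also have "\<dots> = exp 1" by (rule expect_const) simp
    finally show "l t b * expect {1..T} (h b) \<le> exp 1" .
  qed
  also have "\<dots> = exp 1 * real K" by simp
  finally show ?thesis .
qed

lemma expect_full_prob_loss_est:
  assumes t: "t \<in> {1..T}"
  shows "expect {1..T} (\<lambda>A. \<Sum>b\<in>{1..K}. full_prob A t b * l t b)
    = expect {1..T} (\<lambda>A. \<Sum>b\<in>{1..K}. full_prob A t b * loss_est A t b)"
proof -
  have "expect {1..T} (\<lambda>A. \<Sum>b\<in>{1..K}. full_prob A t b * loss_est A t b) = (\<Sum>b\<in>{1..K}. expect {1..T} (\<lambda>A. loss_est A t b * full_prob A t b))"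
    unfolding expect_sum by (simp add: mult.commute)
  also have "\<dots> = (\<Sum>b\<in>{1..K}. l t b * expect {1..T} (\<lambda>A. full_prob A t b))"
    using t past_determined_full_prob by (intro sum.cong refl expect_loss_est_mult) auto
  also have "\<dots> = expect {1..T} (\<lambda>A. \<Sum>b\<in>{1..K}. full_prob A t b * l t b)"
    unfolding expect_sum by (simp add: expect_cmult[symmetric] mult.commute)
  finally show ?thesis by simp
qed

lemma expect_loss_est:
  assumes t: "t \<in> {1..T}" and a: "a \<in> {1..K}"
  shows "expect {1..T} (\<lambda>A. loss_est A t a) = l t a"
  using expect_loss_est_mult[OF t a, of "\<lambda>_. 1"] expect_one[of "{1..T}"] by (simp add: past_determined_def)

lemma expect_loss_le_1: "expect {1..T} (\<lambda>A. \<Sum>b\<in>{1..K}. prob A t b * l t b) \<le> 1"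
proof -
  have "expect {1..T} (\<lambda>A. \<Sum>b\<in>{1..K}. prob A t b * l t b) \<le> expect {1..T} (\<lambda>_. 1)"
  proof (rule expect_mono)
    fix A
    have "(\<Sum>b\<in>{1..K}. prob A t b * l t b) \<le> (\<Sum>b\<in>{1..K}. prob A t b * 1)"
      using prob_pos loss_range by (intro sum_mono mult_left_mono) (auto intro: less_imp_le)
    then show "(\<Sum>b\<in>{1..K}. prob A t b * l t b) \<le> 1" using sum_prob by simp
  qed
  then show ?thesis using expect_one[of "{1..T}"] by simp
qed

lemma expect_round_regret_le_admitted:
  assumes t: "t \<in> {1..T}" and a: "a \<in> {1..K}" and "admitted t"
  shows "expect {1..T} (\<lambda>A. \<Sum>b\<in>{1..K}. prob A t b * l t b) - l t a
    \<le> lr * card (pending t)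
       + expect {1..T} (\<lambda>A. (\<Sum>b\<in>{1..K}. full_prob A t b * loss_est A t b) - loss_est A t a)"
proof -
  have "expect {1..T} (\<lambda>A. \<Sum>b\<in>{1..K}. prob A t b * l t b)
      = expect {1..T} (\<lambda>A. (\<Sum>b\<in>{1..K}. (prob A t b - full_prob A t b) * l t b) + (\<Sum>b\<in>{1..K}. full_prob A t b * l t b))"
    by (simp add: sum.distrib[symmetric] algebra_simps)
  also have "\<dots> = expect {1..T} (\<lambda>A. \<Sum>b\<in>{1..K}. (prob A t b - full_prob A t b) * l t b)
      + expect {1..T} (\<lambda>A. \<Sum>b\<in>{1..K}. full_prob A t b * loss_est A t b)"
    unfolding expect_add expect_full_prob_loss_est[OF t] ..
  also have "expect {1..T} (\<lambda>A. \<Sum>b\<in>{1..K}. full_prob A t b * loss_est A t b)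
      = expect {1..T} (\<lambda>A. (\<Sum>b\<in>{1..K}. full_prob A t b * loss_est A t b) - loss_est A t a) + l t a"
    unfolding expect_diff expect_loss_est[OF t a] by simp
  finally show ?thesis using expect_drift_le[OF t] by simp
qed

lemma expect_exp_weights_regret_le:
  assumes a: "a \<in> {1..K}"
  shows "(\<Sum>t\<in>{1..T}. if admitted t
            then expect {1..T} (\<lambda>A. (\<Sum>b\<in>{1..K}. full_prob A t b * loss_est A t b) - loss_est A t a)
            else 0)
    \<le> ln (real K) / lr + lr / 2 * (exp 1 * real K * real T)"
proof -
  let ?sq = "\<lambda>A t. \<Sum>b\<in>{1..K}. full_prob A t b * (loss_est A t b)^2"
  have "(\<Sum>t\<in>{1..T}. if admitted t
            then expect {1..T} (\<lambda>A. (\<Sum>b\<in>{1..K}. full_prob A t b * loss_est A t b) - loss_est A t a)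
            else 0)
     = expect {1..T} (\<lambda>A. \<Sum>t\<in>{1..T}. if admitted t
            then (\<Sum>b\<in>{1..K}. full_prob A t b * loss_est A t b) - loss_est A t a else 0)"
    unfolding expect_sum expect_if ..
  also have "\<dots> \<le> expect {1..T} (\<lambda>A. ln (real K) / lr + lr / 2 * (\<Sum>t\<in>{1..T}. if admitted t then ?sq A t else 0))"
    by (intro expect_mono exp_weights_regret_le a)
  also have "\<dots> = ln (real K) / lr
      + lr / 2 * (\<Sum>t\<in>{1..T}. if admitted t then expect {1..T} (\<lambda>A. ?sq A t) else 0)"
    unfolding expect_add expect_cmult expect_sum expect_if by (simp add: expect_const)
  also have "\<dots> \<le> ln (real K) / lr + lr / 2 * (\<Sum>t\<in>{1..T}. exp 1 * real K)"
    using expect_second_moment_le lr_pos by (intro add_left_mono mult_left_mono sum_mono) auto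
  finally show ?thesis by (simp add: mult_ac)
qed

lemma card_skipped_le: "(\<Sum>t\<in>{1..T}. if admitted t then 0 else 1) \<le> (\<Sum>t\<in>{1..T}. real (d t)) / beta"
proof -
  have "(\<Sum>t\<in>{1..T}. if admitted t then 0 else (1::real)) \<le> (\<Sum>t\<in>{1..T}. real (d t) / beta)"
    using beta_pos by (intro sum_mono) (auto simp: admitted_def field_simps)
  then show ?thesis by (simp add: sum_divide_distrib)
qed

lemma sum_card_pending_le: "(\<Sum>t\<in>{1..T}. real (card (pending t))) \<le> (\<Sum>t\<in>{1..T}. real (d t))"
proof -
  have "(\<Sum>t\<in>{1..T}. real (card (pending t))) \<le> (\<Sum>t\<in>{1..T}. \<Sum>s\<in>{1..T}. if s < t \<and> t \<le> s + d s then 1 else 0)"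
  proof (intro sum_mono)
    fix t assume t: "t \<in> {1..T}"
    have "pending t \<subseteq> {s\<in>{1..T}. s < t \<and> t \<le> s + d s}" using t unfolding pending_def by auto
    then have "card (pending t) \<le> card {s\<in>{1..T}. s < t \<and> t \<le> s + d s}" by (intro card_mono) auto
    then show "real (card (pending t)) \<le> (\<Sum>s\<in>{1..T}. if s < t \<and> t \<le> s + d s then 1 else 0)"
      by (subst sum_if_const) auto
  qed
  also have "\<dots> = (\<Sum>s\<in>{1..T}. \<Sum>t\<in>{1..T}. if s < t \<and> t \<le> s + d s then 1 else 0)"
    by (rule sum.swap)
  also have "\<dots> \<le> (\<Sum>s\<in>{1..T}. real (d s))"
  proof (intro sum_mono)
    fix s
    have "card {t\<in>{1..T}. s < t \<and> t \<le> s + d s} \<le> card {s<..s + d s}" by (intro card_mono) auto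
    then show "(\<Sum>t\<in>{1..T}. if s < t \<and> t \<le> s + d s then 1 else 0) \<le> real (d s)"
      by (subst sum_if_const) auto
  qed
  finally show ?thesis .
qed

theorem expect_regret_le:
  assumes a: "a \<in> {1..K}" and D: "D = (\<Sum>t\<in>{1..T}. real (d t))"
  shows "expect {1..T} (\<lambda>A. \<Sum>t\<in>{1..T}. l t (A t)) - (\<Sum>t\<in>{1..T}. l t a)
    \<le> D / beta + lr * D + ln (real K) / lr + lr / 2 * (exp 1 * real K * real T)"
proof -
  define ew where "ew t = expect {1..T} (\<lambda>A. (\<Sum>b\<in>{1..K}. full_prob A t b * loss_est A t b) - loss_est A t a)" for t
  have round: "expect {1..T} (\<lambda>A. \<Sum>b\<in>{1..K}. prob A t b * l t b) - l t a
      \<le> (if admitted t then 0 else 1) + lr * card (pending t) + (if admitted t then ew t else 0)"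
    if t: "t \<in> {1..T}" for t
    using expect_round_regret_le_admitted[OF t a] expect_loss_le_1[of T t] loss_range[of t a]
      lr_pos unfolding ew_def by (cases "admitted t") (auto intro: add_increasing2)
  have "expect {1..T} (\<lambda>A. \<Sum>t\<in>{1..T}. l t (A t)) - (\<Sum>t\<in>{1..T}. l t a)
      = (\<Sum>t\<in>{1..T}. expect {1..T} (\<lambda>A. \<Sum>b\<in>{1..K}. prob A t b * l t b) - l t a)"
    unfolding expect_sum[where g="\<lambda>t A. l t (A t)"] sum_subtractf
    by (intro arg_cong2[where f=minus] sum.cong refl expect_loss_played)
  also have "\<dots> \<le> (\<Sum>t\<in>{1..T}. (if admitted t then 0 else 1) + lr * card (pending t) + (if admitted t then ew t else 0))"
    using round by (rule sum_mono)
  also have "\<dots> = (\<Sum>t\<in>{1..T}. if admitted t then 0 else 1) + lr * (\<Sum>t\<in>{1..T}. real (card (pending t)))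
      + (\<Sum>t\<in>{1..T}. if admitted t then ew t else 0)"
    by (simp add: sum.distrib sum_distrib_left)
  also have "\<dots> \<le> D / beta + lr * D + (ln (real K) / lr + lr / 2 * (exp 1 * real K * real T))"
    using card_skipped_le sum_card_pending_le expect_exp_weights_regret_le[OF a] lr_pos D
    unfolding ew_def by (intro add_mono mult_left_mono) auto
  finally show ?thesis by simp
qed

end


theorem skipper_dew_regret_le:
  fixes K T :: nat and l :: "nat \<Rightarrow> nat \<Rightarrow> real" and d :: "nat \<Rightarrow> nat" and eta beta D :: real
  assumes K: "K \<ge> 1" and eta: "eta > 0" and beta: "beta > 0"
    and loss_range: "\<And>t a. 0 \<le> l t a \<and> l t a \<le> 1"
    and D: "D = (\<Sum>t\<in>{1..T}. real (d t))"
  defines "lr \<equiv> dew_rate eta beta"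
  shows "skipper_dew_regret K T eta beta l d
    \<le> D / beta + lr * D + ln (real K) / lr + lr / 2 * (exp 1 * real K * real T)"
proof -
  have "lr * beta \<le> 1 / (4 * exp 1)"
    using beta unfolding lr_def dew_rate_def by (simp add: min_def field_simps)
  moreover have "lr > 0" using eta beta unfolding lr_def dew_rate_def by simp
  ultimately interpret skipper_dew K lr beta l d
    using K beta loss_range by unfold_locales
  have prob: "skipper_dew_prob K eta beta l d = prob"
    unfolding skipper_dew_prob_def Let_def lr_def[symmetric]
    by (intro ext) (simp add: prob_def weight_sum_def est_def)
  obtain a where a: "a \<in> {1..K}" and
    min: "(MIN a\<in>{1..K}. \<Sum>t\<in>{1..T}. l t a) = (\<Sum>t\<in>{1..T}. l t a)"
    using Min_in[of "(\<lambda>a. \<Sum>t\<in>{1..T}. l t a) ` {1..K}"] K by fastforce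
  have "skipper_dew_regret K T eta beta l d
      = expect {1..T} (\<lambda>A. \<Sum>t\<in>{1..T}. l t (A t)) - (\<Sum>t\<in>{1..T}. l t a)"
    unfolding skipper_dew_regret_def prob expect_def min ..
  then show ?thesis using expect_regret_le[OF a D] by simp
qed

theorem corollary4:
  fixes K T :: nat and l :: "nat \<Rightarrow> nat \<Rightarrow> real" and d :: "nat \<Rightarrow> nat"
    and D eta beta :: real
  assumes "K \<ge> 2" and "T \<ge> 1"
    and "\<And>t a. 0 \<le> l t a \<and> l t a \<le> 1"
    and "D = (\<Sum>t\<in>{1..T}. real (d t))"
    and "beta = sqrt (((exp 1 * K * T / 2 + D) / (4 * exp 1) + D) / (4 * exp 1 * ln K))"
    and "eta = 1 / (4 * exp 1 * beta)"
  shows "skipper_dew_regret K T eta beta l d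
           \<le> 2 * sqrt ((K * T * exp 1 / 2 + (1 + 4 * exp 1) * D) * ln K)"
proof -
  note K = assms(1) and D = assms(4) and beta = assms(5) and eta = assms(6)
  define Y where "Y = (exp 1 * K * T / 2 + D) / (4 * exp 1) + D"
  define c where "c = 4 * exp 1 * ln (real K)"
  have "D \<ge> 0" unfolding D by (simp add: sum_nonneg)
  then have Y_pos: "Y > 0" unfolding Y_def using assms(2) K by (simp add: add_pos_nonneg)
  have c_pos: "c > 0" unfolding c_def using K by simp
  have beta_pos: "beta > 0" unfolding beta using Y_pos c_pos by (simp add: Y_def c_def)
  have "dew_rate eta beta = eta" unfolding dew_rate_def eta by simp
  then have "skipper_dew_regret K T eta beta l d
      \<le> D / beta + eta * D + ln (real K) / eta + eta / 2 * (exp 1 * real K * real T)"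
    using skipper_dew_regret_le[where eta=eta, OF _ _ beta_pos assms(3) D] K beta_pos
    unfolding eta by simp
  also have "\<dots> = Y / beta + c * beta"
    unfolding eta Y_def c_def using beta_pos by (simp add: field_simps)
  also have "\<dots> = 2 * sqrt (c * Y)"
    unfolding beta using sqrt_balance[OF c_pos Y_pos] by (simp add: Y_def c_def)
  also have "c * Y = (K * T * exp 1 / 2 + (1 + 4 * exp 1) * D) * ln K"
    unfolding c_def Y_def by (simp add: field_simps)
  finally show ?thesis .
qed

end
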